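(* Consider one execution of the Modified NCB algorithm with inputs $k$ and $W$, where $\sqrt T\le W\le T$, and assume $968kS\le T$. On the event $E$, every arm $i$ that is pulled at least once in Phase 2 satisfies $$\mu_i\ge\mu^*-4c\sqrt{\frac{\mu^*\log T}{T_i-1}},$$ where $T_i$ is the total number of times arm $i$ is pulled in this execution.
   Context: Bandit setup: $k$ arms, arm $i$ a distribution on $[0,1]$ with mean $\mu_i$, $\mu^*:=\max_i\mu_i>0$. $\log$ is the natural logarithm; $c:=3$; $T$ is the overall horizon and $S:=\frac{c^2\log T}{\mu^*}$. Modified NCB algorithm (inputs $k$, window $W$): maintain counts $n_i$ and empirical means $\widehat\mu_i$ (both initially $0$), round index $t=1$. Phase 1: while $\max_i n_i\widehat\mu_i\le 420c^2\log W$ and $t\le W$, pull a uniformly random arm, update, increment $t$. Phase 2: while $t\le W$, pull an arm maximizing $\overline{\mathrm{NCB}}_i:=\widehat\mu_i+2c\sqrt{2\widehat\mu_i\log W/n_i}$ (ties arbitrary), update, increment $t$. Canonical model: a $k\times T$ table $(Y_{i,s})$ of independent entries with $Y_{i,s}$ distributed as arm $i$, the $s$-th pull of arm $i$ yielding $Y_{i,s}$; $\widehat\mu_{i,s}:=\frac1s\sum_{r=1}^sY_{i,r}$. The uniform choices in Phase 1 are $U_1,U_2,\dots$, independent uniform in $[k]$ (independent of the table). Events: $E_1$: for every integer $r$ with $128kS\le r\le T$ and every arm $i$, the number of $r'\le r$ with $U_{r'}=i$ is at least $\frac{r}{2k}$ and at most $\frac{3r}{2k}$. $E_2$: for every arm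 $i$ with $\mu_i>\frac{\mu^*}{64}$ and every integer $s$ with $64S\le s\le T$, $|\mu_i-\widehat\mu_{i,s}|\le c\sqrt{\frac{\mu_i\log T}{s}}$. $E_3$: for every arm $j$ with $\mu_j\le\frac{\mu^*}{64}$ and every integer $s$ with $64S\le s\le T$, $\widehat\mu_{j,s}<\frac{\mu^*}{32}$. $E:=E_1\cap E_2\cap E_3$. *)

theory Defs
  imports Complex_Main
begin

text \<open>Arms are indexed by 0..k-1. The constant c of the paper is 3.\<close>

definition c_const :: real where "c_const = 3"

definition mu_star :: "nat \<Rightarrow> (nat \<Rightarrow> real) \<Rightarrow> real" where
  "mu_star k \<mu> = Max (\<mu> ` {..<k})"

definition S_val :: "nat \<Rightarrow> real \<Rightarrow> real" where
  "S_val T ms = c_const^2 * ln (real T) / ms"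

text \<open>Empirical mean of the first s entries of row i of the canonical table.\<close>
definition muhat :: "(nat \<Rightarrow> nat \<Rightarrow> real) \<Rightarrow> nat \<Rightarrow> nat \<Rightarrow> real" where
  "muhat Y i s = (\<Sum>r=1..s. Y i r) / real s"

definition event_E1 :: "nat \<Rightarrow> nat \<Rightarrow> real \<Rightarrow> (nat \<Rightarrow> nat) \<Rightarrow> bool" where
  "event_E1 k T S U \<longleftrightarrow>
     (\<forall>r::nat. 128 * real k * S \<le> real r \<and> r \<le> T \<longrightarrow>
        (\<forall>i<k. real r / (2 * real k) \<le> real (card {r'\<in>{1..r}. U r' = i}) \<and>
               real (card {r'\<in>{1..r}. U r' = i}) \<le> 3 * real r / (2 * real k)))"

definition event_E2 :: "nat \<Rightarrow> nat \<Rightarrow> (nat \<Rightarrow> real) \<Rightarrow> (nat \<Rightarrow> nat \<Rightarrow> real) \<Rightarrow> bool" where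
  "event_E2 k T \<mu> Y \<longleftrightarrow>
     (\<forall>i<k. \<mu> i > mu_star k \<mu> / 64 \<longrightarrow>
        (\<forall>s::nat. 64 * S_val T (mu_star k \<mu>) \<le> real s \<and> 1 \<le> s \<and> s \<le> T \<longrightarrow>
           \<bar>\<mu> i - muhat Y i s\<bar> \<le> c_const * sqrt (\<mu> i * ln (real T) / real s)))"

definition event_E3 :: "nat \<Rightarrow> nat \<Rightarrow> (nat \<Rightarrow> real) \<Rightarrow> (nat \<Rightarrow> nat \<Rightarrow> real) \<Rightarrow> bool" where
  "event_E3 k T \<mu> Y \<longleftrightarrow>
     (\<forall>j<k. \<mu> j \<le> mu_star k \<mu> / 64 \<longrightarrow>
        (\<forall>s::nat. 64 * S_val T (mu_star k \<mu>) \<le> real s \<and> 1 \<le> s \<and> s \<le> T \<longrightarrow>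
           muhat Y j s < mu_star k \<mu> / 32))"

definition event_E :: "nat \<Rightarrow> nat \<Rightarrow> (nat \<Rightarrow> real) \<Rightarrow> (nat \<Rightarrow> nat \<Rightarrow> real) \<Rightarrow> (nat \<Rightarrow> nat) \<Rightarrow> bool" where
  "event_E k T \<mu> Y U \<longleftrightarrow>
     event_E1 k T (S_val T (mu_star k \<mu>)) U \<and> event_E2 k T \<mu> Y \<and> event_E3 k T \<mu> Y"

text \<open>Execution of Modified NCB: a t is the arm pulled in round t (t = 1..W).
  State before round t: counts, reward sums (n_i * muhat_i) and empirical means.\<close>

definition pulls :: "(nat \<Rightarrow> nat) \<Rightarrow> nat \<Rightarrow> nat \<Rightarrow> nat" where
  "pulls a i t = card {r\<in>{1..<t}. a r = i}"

definition rsum :: "(nat \<Rightarrow> nat \<Rightarrow> real) \<Rightarrow> (nat \<Rightarrow> nat) \<Rightarrow> nat \<Rightarrow> nat \<Rightarrow> real" where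
  "rsum Y a i t = (\<Sum>s=1..pulls a i t. Y i s)"

definition emp_mean :: "(nat \<Rightarrow> nat \<Rightarrow> real) \<Rightarrow> (nat \<Rightarrow> nat) \<Rightarrow> nat \<Rightarrow> nat \<Rightarrow> real" where
  "emp_mean Y a i t = (if pulls a i t = 0 then 0 else rsum Y a i t / real (pulls a i t))"

definition NCB :: "nat \<Rightarrow> (nat \<Rightarrow> nat \<Rightarrow> real) \<Rightarrow> (nat \<Rightarrow> nat) \<Rightarrow> nat \<Rightarrow> nat \<Rightarrow> real" where
  "NCB W Y a i t = emp_mean Y a i t +
     2 * c_const * sqrt (2 * emp_mean Y a i t * ln (real W) / real (pulls a i t))"

definition phase1_cond :: "nat \<Rightarrow> nat \<Rightarrow> (nat \<Rightarrow> nat \<Rightarrow> real) \<Rightarrow> (nat \<Rightarrow> nat) \<Rightarrow> nat \<Rightarrow> bool" where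
  "phase1_cond k W Y a t \<longleftrightarrow> (\<forall>i<k. rsum Y a i t \<le> 420 * c_const^2 * ln (real W))"

definition in_phase1 :: "nat \<Rightarrow> nat \<Rightarrow> (nat \<Rightarrow> nat \<Rightarrow> real) \<Rightarrow> (nat \<Rightarrow> nat) \<Rightarrow> nat \<Rightarrow> bool" where
  "in_phase1 k W Y a t \<longleftrightarrow> (\<forall>r\<in>{1..t}. phase1_cond k W Y a r)"

text \<open>Valid execution: Phase-1 rounds pull U t; Phase-2 rounds pull a maximizer of the NCB index,
  where an arm with n_i = 0 is regarded as having index +infinity (ties arbitrary).\<close>
definition is_execution :: "nat \<Rightarrow> nat \<Rightarrow> (nat \<Rightarrow> nat) \<Rightarrow> (nat \<Rightarrow> nat \<Rightarrow> real) \<Rightarrow> (nat \<Rightarrow> nat) \<Rightarrow> bool" where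
  "is_execution k W U Y a \<longleftrightarrow>
     (\<forall>t\<in>{1..W}. a t < k \<and>
        (if in_phase1 k W Y a t then a t = U t
         else (pulls a (a t) t = 0 \<or>
               (\<forall>j<k. 0 < pulls a j t \<and> NCB W Y a j t \<le> NCB W Y a (a t) t))))"

definition total_pulls :: "nat \<Rightarrow> (nat \<Rightarrow> nat) \<Rightarrow> nat \<Rightarrow> nat" where
  "total_pulls W a i = card {t\<in>{1..W}. a t = i}"

definition pulled_in_phase2 :: "nat \<Rightarrow> nat \<Rightarrow> (nat \<Rightarrow> nat \<Rightarrow> real) \<Rightarrow> (nat \<Rightarrow> nat) \<Rightarrow> nat \<Rightarrow> bool" where
  "pulled_in_phase2 k W Y a i \<longleftrightarrow> (\<exists>t\<in>{1..W}. \<not> in_phase1 k W Y a t \<and> a t = i)"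

end

theory Submission imports Defs begin

text \<open>Phase 1 stops only once some arm has collected reward above \<open>3780 log W \<ge> 1890 log T\<close>.
  On \<open>E\<close> an arm with at most \<open>192 S + 3/2\<close> samples collects at most \<open>1890 log T\<close>, so by \<open>E\<^sub>1\<close>
  Phase 1 lasts at least \<open>128 k S\<close> rounds and afterwards every arm has at least \<open>64 S\<close> samples.
  With that many samples, \<open>E\<^sub>2\<close> and \<open>E\<^sub>3\<close> make the NCB index of an optimal arm at least \<open>\<mu>\<^sup>*\<close>,
  the index of a bad arm (\<open>\<mu>\<^sub>i \<le> \<mu>\<^sup>*/64\<close>) below \<open>\<mu>\<^sup>*\<close>, and the index of any other arm at most
  \<open>\<mu>\<^sub>i + 4c\<surd>(\<mu>\<^sup>* log T / n\<^sub>i)\<close>. Comparing indices at the last pull of arm \<open>i\<close>, when \<open>n\<^sub>i = T\<^sub>i - 1\<close>,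
  gives the claim.\<close>

lemma sqrt_scale: "0 \<le> (a::real) \<Longrightarrow> a * sqrt x = sqrt (a\<^sup>2 * x)"
  by (simp add: real_sqrt_mult)

lemma conf_radius_le:
  fixes m L n :: real
  assumes "0 < m" "0 \<le> L" "0 < n" "576 * L / m \<le> n"
  shows "3 * sqrt (m * L / n) \<le> m / 8"
proof -
  have "576 * L \<le> n * m" using assms by (simp add: field_simps)
  then have "9 * (m * L / n) \<le> (m / 8)\<^sup>2" using assms by (simp add: field_simps power2_eq_square)
  then have "sqrt (9 * (m * L / n)) \<le> m / 8" using assms by (intro real_le_lsqrt) auto
  then show ?thesis by (simp add: sqrt_scale)
qed

lemma ncb_index_ge_mean:
  fixes m L lW n h :: real
  assumes "0 < m" "0 \<le> L" "0 < n" "576 * L / m \<le> n" "L / 2 \<le> lW"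
    and close: "\<bar>m - h\<bar> \<le> 3 * sqrt (m * L / n)"
  shows "m \<le> h + 6 * sqrt (2 * h * lW / n)"
proof -
  have h: "7 * m / 8 \<le> h" using conf_radius_le assms close by fastforce
  have "9 * m * L \<le> 72 * (7 * m / 8) * (L / 2)" using assms by simp
  also have "\<dots> \<le> 72 * h * lW" using h assms by (intro mult_mono) auto
  finally have "9 * (m * L / n) \<le> 36 * (2 * h * lW / n)" using assms by (simp add: field_simps)
  then have "sqrt (9 * (m * L / n)) \<le> sqrt (36 * (2 * h * lW / n))" by simp
  then have "3 * sqrt (m * L / n) \<le> 6 * sqrt (2 * h * lW / n)" by (simp add: sqrt_scale)
  then show ?thesis using close by linarith
qed

lemma ncb_index_le_mean:
  fixes m L lW n h \<mu> :: real
  assumes "0 < m" "0 \<le> L" "0 < n" "576 * L / m \<le> n" "0 \<le> lW" "lW \<le> L" "0 \<le> h"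
    and "0 \<le> \<mu>" "\<mu> \<le> m"
    and close: "h \<le> \<mu> + 3 * sqrt (\<mu> * L / n)"
  shows "h + 6 * sqrt (2 * h * lW / n) \<le> \<mu> + 12 * sqrt (m * L / n)"
proof -
  have radius: "3 * sqrt (m * L / n) \<le> m / 8" using conf_radius_le assms by blast
  have mono: "sqrt (\<mu> * L / n) \<le> sqrt (m * L / n)"
    using assms by (simp add: divide_right_mono mult_right_mono)
  have h: "h \<le> 9 * m / 8" using radius mono close \<open>\<mu> \<le> m\<close> by linarith
  have "2 * h * lW / n \<le> 2 * (9 * m / 8) * L / n"
    using h assms by (intro divide_right_mono mult_mono) auto
  also have "2 * (9 * m / 8) * L / n = 9/4 * (m * L / n)" by simp
  finally have "36 * (2 * h * lW / n) \<le> 36 * (9/4 * (m * L / n))" by (rule mult_left_mono) simp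
  then have "36 * (2 * h * lW / n) \<le> 81 * (m * L / n)" by (simp add: mult.commute)
  then have "sqrt (36 * (2 * h * lW / n)) \<le> sqrt (81 * (m * L / n))" by simp
  then have "6 * sqrt (2 * h * lW / n) \<le> 9 * sqrt (m * L / n)" by (simp add: sqrt_scale)
  then show ?thesis using mono close by linarith
qed

lemma ncb_index_lt_of_small_mean:
  fixes m L lW n h :: real
  assumes "0 < m" "0 \<le> L" "0 < n" "576 * L / m \<le> n" "0 \<le> lW" "lW \<le> L" "0 \<le> h"
    and small: "h < m / 32"
  shows "h + 6 * sqrt (2 * h * lW / n) < m"
proof -
  have radius: "3 * sqrt (m * L / n) \<le> m / 8" using conf_radius_le assms by blast
  have "2 * h * lW / n \<le> 2 * (m / 32) * L / n"
    using assms by (intro divide_right_mono mult_mono) auto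
  then have "6\<^sup>2 * (2 * h * lW / n) \<le> (3/2)\<^sup>2 * (m * L / n)" by (simp add: power2_eq_square)
  then have "sqrt (6\<^sup>2 * (2 * h * lW / n)) \<le> sqrt ((3/2)\<^sup>2 * (m * L / n))" by simp
  then have "6 * sqrt (2 * h * lW / n) \<le> 3/2 * sqrt (m * L / n)"
    by (simp only: sqrt_scale[symmetric])
  then show ?thesis using radius small assms(1) by linarith
qed

lemma few_samples_reward_le:
  fixes m L n \<mu> :: real
  assumes "0 < m" "m \<le> 1" "1 \<le> L" "0 < n" "n \<le> 192 * (9 * L / m) + 2" "0 \<le> \<mu>" "\<mu> \<le> m"
  shows "n * \<mu> + n * (3 * sqrt (\<mu> * L / n)) \<le> 1890 * L"
proof -
  have "n * m \<le> (192 * (9 * L / m) + 2) * m" using assms by (intro mult_right_mono) auto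
  also have "\<dots> = 1728 * L + 2 * m" using assms by (simp add: field_simps)
  finally have nm: "n * m \<le> 1728 * L + 2" using assms by linarith
  have n\<mu>: "n * \<mu> \<le> n * m" using assms by (intro mult_left_mono) auto
  have "(3 * n)\<^sup>2 * (\<mu> * L / n) = 9 * (n * \<mu>) * L" using assms by (simp add: power2_eq_square field_simps)
  also have "\<dots> \<le> 9 * (1728 * L + 2) * L"
    using n\<mu> nm assms by (intro mult_right_mono mult_left_mono) linarith+
  also have "\<dots> \<le> (125 * L)\<^sup>2" using assms by (simp add: power2_eq_square algebra_simps)
  finally have "sqrt ((3 * n)\<^sup>2 * (\<mu> * L / n)) \<le> 125 * L" using assms by (intro real_le_lsqrt) auto
  moreover have "sqrt ((3 * n)\<^sup>2 * (\<mu> * L / n)) = n * (3 * sqrt (\<mu> * L / n))"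
    using assms by (subst sqrt_scale[symmetric]) auto
  ultimately show ?thesis using n\<mu> nm assms by linarith
qed

lemma in_phase1_mono: "in_phase1 k W Y a t \<Longrightarrow> s \<le> t \<Longrightarrow> in_phase1 k W Y a s"
  unfolding in_phase1_def by auto

lemma pulls_mono: "t \<le> t' \<Longrightarrow> pulls a j t \<le> pulls a j t'"
  unfolding pulls_def by (intro card_mono) auto

lemma pulls_le: "pulls a j t \<le> t - 1"
proof -
  have "pulls a j t \<le> card {1..<t}" unfolding pulls_def by (intro card_mono) auto
  then show ?thesis by simp
qed

lemma muhat_nonneg: "(\<And>s. 0 \<le> Y i s) \<Longrightarrow> 0 \<le> muhat Y i s"
  unfolding muhat_def by (intro divide_nonneg_nonneg sum_nonneg) auto

lemma NCB_eq_muhat: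
  assumes "0 < pulls a j t"
  shows "NCB W Y a j t = muhat Y j (pulls a j t) +
           6 * sqrt (2 * muhat Y j (pulls a j t) * ln (real W) / real (pulls a j t))"
  using assms unfolding NCB_def emp_mean_def rsum_def muhat_def c_const_def by simp

lemma total_pulls_eq_last_pull:
  assumes "t \<in> {1..W}" "a t = i"
  obtains tl where "tl \<in> {1..W}" "t \<le> tl" "a tl = i" "total_pulls W a i = pulls a i tl + 1"
proof -
  define P where "P = {t\<in>{1..W}. a t = i}"
  have "finite P" "t \<in> P" using assms unfolding P_def by auto
  define tl where "tl = Max P"
  have tl: "tl \<in> P" "\<And>r. r \<in> P \<Longrightarrow> r \<le> tl"
    using \<open>finite P\<close> \<open>t \<in> P\<close> unfolding tl_def by (auto intro: Max_in)
  have "P = insert tl {r\<in>{1..<tl}. a r = i}"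
    using tl unfolding P_def by (auto simp: le_less)
  then have "total_pulls W a i = pulls a i tl + 1"
    unfolding total_pulls_def pulls_def P_def[symmetric] by simp
  with tl \<open>t \<in> P\<close> show ?thesis using that unfolding P_def by blast
qed

definition phase2_start :: "nat \<Rightarrow> nat \<Rightarrow> (nat \<Rightarrow> nat \<Rightarrow> real) \<Rightarrow> (nat \<Rightarrow> nat) \<Rightarrow> nat" where
  "phase2_start k W Y a = (LEAST t. \<not> in_phase1 k W Y a t)"

lemma phase2_start_le: "\<not> in_phase1 k W Y a t \<Longrightarrow> phase2_start k W Y a \<le> t"
  unfolding phase2_start_def by (rule Least_le)

lemma in_phase1_before_phase2_start: "t < phase2_start k W Y a \<Longrightarrow> in_phase1 k W Y a t"
  using phase2_start_le not_le by blast

lemma phase1_cond_fails_at_phase2_start: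
  assumes "\<not> in_phase1 k W Y a t"
  shows "1 \<le> phase2_start k W Y a" "\<not> phase1_cond k W Y a (phase2_start k W Y a)"
proof -
  let ?t1 = "phase2_start k W Y a"
  have "\<not> in_phase1 k W Y a ?t1" unfolding phase2_start_def using assms by (rule LeastI)
  then obtain r where r: "r \<in> {1..?t1}" "\<not> phase1_cond k W Y a r"
    unfolding in_phase1_def by auto
  moreover have "\<not> r < ?t1"
    using r in_phase1_before_phase2_start unfolding in_phase1_def by fastforce
  ultimately show "1 \<le> ?t1" "\<not> phase1_cond k W Y a ?t1" by auto
qed

lemma pulls_phase2_start:
  assumes "is_execution k W U Y a" "phase2_start k W Y a \<le> W"
  shows "pulls a j (phase2_start k W Y a) = card {r\<in>{1..phase2_start k W Y a - 1}. U r = j}"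
proof -
  let ?t1 = "phase2_start k W Y a"
  have "a r = U r" if "r \<in> {1..<?t1}" for r
    using assms that in_phase1_before_phase2_start[of r] unfolding is_execution_def by auto
  then have "{r\<in>{1..<?t1}. a r = j} = {r\<in>{1..?t1 - 1}. U r = j}" by auto
  then show ?thesis unfolding pulls_def by simp
qed

locale ncb_run =
  fixes k W T :: nat and \<mu> :: "nat \<Rightarrow> real" and Y :: "nat \<Rightarrow> nat \<Rightarrow> real"
    and U :: "nat \<Rightarrow> nat" and a :: "nat \<Rightarrow> nat"
  assumes k_pos: "0 < k" and T_ge_2: "2 \<le> T"
    and mu_range: "\<forall>i<k. 0 \<le> \<mu> i \<and> \<mu> i \<le> 1"
    and mu_star_pos: "0 < mu_star k \<mu>"
    and Y_nonneg: "\<forall>i<k. \<forall>s. 0 \<le> Y i s"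
    and W_lo: "sqrt (real T) \<le> real W" and W_hi: "W \<le> T"
    and T_big: "968 * real k * S_val T (mu_star k \<mu>) \<le> real T"
    and exec: "is_execution k W U Y a"
    and evE: "event_E k T \<mu> Y U"
begin

abbreviation "ms \<equiv> mu_star k \<mu>"
abbreviation "L \<equiv> ln (real T)"
abbreviation "S \<equiv> S_val T ms"

lemma S_eq: "S = 9 * L / ms"
  unfolding S_val_def c_const_def by simp

lemma mu_le_ms: "j < k \<Longrightarrow> \<mu> j \<le> ms"
  unfolding mu_star_def by simp

lemma optimal_arm_exists: obtains js where "js < k" "\<mu> js = ms"
  using Max_in[of "\<mu> ` {..<k}"] k_pos unfolding mu_star_def by fastforce

lemma ms_le_1: "ms \<le> 1"
  using optimal_arm_exists mu_range by metis

lemma S_ge: "9 * L \<le> S"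
proof -
  have "9 * L / 1 \<le> 9 * L / ms"
    using mu_star_pos ms_le_1 T_ge_2 by (intro divide_left_mono) auto
  then show ?thesis unfolding S_eq by simp
qed

lemma T_ge_S: "968 * S \<le> real T"
proof -
  have "0 \<le> L" using T_ge_2 by simp
  then have "0 \<le> S" using S_ge by linarith
  then have "S \<le> real k * S" using k_pos mult_right_mono[of 1 "real k" S] by simp
  then show ?thesis using T_big by linarith
qed

lemma L_ge_1: "1 \<le> L"
proof -
  have "1/2 \<le> ln (1 + (1::real))" using ln_add1_ge[of 1] by (simp add: add.commute)
  also have "\<dots> \<le> L" using T_ge_2 by (intro ln_mono) auto
  finally have "3 \<le> real T" using T_ge_S S_ge by linarith
  then have "exp 1 \<le> real T" using exp_le by linarith
  then show ?thesis using T_ge_2 by (subst ln_ge_iff) auto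
qed

lemma ln_W_bounds: "L / 2 \<le> ln (real W)" "ln (real W) \<le> L" "0 \<le> ln (real W)"
proof -
  have "1 \<le> sqrt (real T)" using T_ge_2 by simp
  then have W1: "1 \<le> W" using W_lo by linarith
  have "L / 2 = ln (sqrt (real T))" by (simp add: ln_sqrt)
  also have "\<dots> \<le> ln (real W)" using W_lo T_ge_2 by (intro ln_mono) auto
  finally show "L / 2 \<le> ln (real W)" .
  show "ln (real W) \<le> L" "0 \<le> ln (real W)" using W_hi W1 by (auto intro: ln_mono)
qed

lemma uniform_counts:
  "128 * real k * S \<le> real r \<Longrightarrow> r \<le> T \<Longrightarrow> j < k \<Longrightarrow>
     real r / (2 * real k) \<le> real (card {r'\<in>{1..r}. U r' = j}) \<and>
     real (card {r'\<in>{1..r}. U r' = j}) \<le> 3 * real r / (2 * real k)"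
  using evE unfolding event_E_def event_E1_def by auto

lemma muhat_close:
  "j < k \<Longrightarrow> ms / 64 < \<mu> j \<Longrightarrow> 64 * S \<le> real s \<Longrightarrow> 1 \<le> s \<Longrightarrow> s \<le> T \<Longrightarrow>
     \<bar>\<mu> j - muhat Y j s\<bar> \<le> 3 * sqrt (\<mu> j * L / real s)"
  using evE unfolding event_E_def event_E2_def c_const_def by auto

lemma muhat_small:
  "j < k \<Longrightarrow> \<mu> j \<le> ms / 64 \<Longrightarrow> 64 * S \<le> real s \<Longrightarrow> 1 \<le> s \<Longrightarrow> s \<le> T \<Longrightarrow>
     muhat Y j s < ms / 32"
  using evE unfolding event_E_def event_E3_def by auto

text \<open>Pad the sample count up to \<open>64 S\<close>, the range where \<open>E\<^sub>2\<close> and \<open>E\<^sub>3\<close> apply.\<close>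
lemma reward_le_if_few_samples:
  assumes j: "j < k" and n: "real n \<le> 192 * S + 3/2"
  shows "(\<Sum>r=1..n. Y j r) \<le> 1890 * L"
proof -
  define m where "m = max n (nat \<lceil>64 * S\<rceil>)"
  have m_lo: "64 * S \<le> real m" unfolding m_def by linarith
  have m_hi: "real m \<le> 192 * S + 2"
    unfolding m_def using n S_ge L_ge_1 ceiling_correct[of "64 * S"] by (simp add: of_nat_nat)
  have m_pos: "1 \<le> m" using m_lo S_ge L_ge_1 by simp
  have "real m \<le> real T" using m_hi T_ge_S S_ge L_ge_1 by linarith
  then have m_T: "m \<le> T" by simp
  have "(\<Sum>r=1..n. Y j r) \<le> (\<Sum>r=1..m. Y j r)"
    using Y_nonneg j unfolding m_def by (intro sum_mono2) auto
  also have "\<dots> = real m * muhat Y j m" using m_pos unfolding muhat_def by simp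
  also have "\<dots> \<le> 1890 * L"
  proof (cases "ms / 64 < \<mu> j")
    case True
    have "muhat Y j m \<le> \<mu> j + 3 * sqrt (\<mu> j * L / real m)"
      using muhat_close[OF j True m_lo m_pos m_T] by linarith
    then have "real m * muhat Y j m \<le> real m * \<mu> j + real m * (3 * sqrt (\<mu> j * L / real m))"
      by (simp add: distrib_left[symmetric] mult_left_mono)
    also have "\<dots> \<le> 1890 * L"
      using few_samples_reward_le[OF mu_star_pos ms_le_1 L_ge_1, of "real m" "\<mu> j"]
        m_pos m_hi S_eq mu_range j mu_le_ms by simp
    finally show ?thesis .
  next
    case False
    have "muhat Y j m < ms / 32" using muhat_small[OF j _ m_lo m_pos m_T] False by simp
    then have "real m * muhat Y j m \<le> (192 * S + 2) * (ms / 32)"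
      using m_hi m_pos mu_star_pos muhat_nonneg[of Y j m] Y_nonneg j by (intro mult_mono) auto
    also have "\<dots> = (1728 * L + 2 * ms) / 32" using mu_star_pos unfolding S_eq by (simp add: field_simps)
    also have "\<dots> \<le> 1890 * L" using ms_le_1 L_ge_1 by simp
    finally show ?thesis .
  qed
  finally show ?thesis .
qed

lemma phase1_long:
  assumes "t \<le> W" "\<not> in_phase1 k W Y a t"
  shows "128 * real k * S \<le> real (phase2_start k W Y a - 1)"
proof (rule ccontr)
  let ?t1 = "phase2_start k W Y a"
  define R where "R = ?t1 - 1"
  assume "\<not> 128 * real k * S \<le> real (?t1 - 1)"
  then have R_lt: "real R < 128 * real k * S" unfolding R_def by simp
  have t1_W: "?t1 \<le> W" using phase2_start_le[OF assms(2)] assms(1) by simp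
  obtain jb where jb: "jb < k" "420 * c_const\<^sup>2 * ln (real W) < rsum Y a jb ?t1"
    using phase1_cond_fails_at_phase2_start[OF assms(2)] unfolding phase1_cond_def by force
  define r0 where "r0 = nat \<lceil>128 * real k * S\<rceil>"
  have r0_lo: "128 * real k * S \<le> real r0" unfolding r0_def by linarith
  have r0_hi: "real r0 < 128 * real k * S + 1"
    unfolding r0_def using S_ge L_ge_1 k_pos ceiling_correct[of "128 * real k * S"]
    by (simp add: of_nat_nat)
  have "r0 \<le> T" using r0_hi T_big S_ge L_ge_1 by simp
  have "real (pulls a jb ?t1) \<le> real (card {r\<in>{1..r0}. U r = jb})"
    unfolding pulls_phase2_start[OF exec t1_W] R_def[symmetric]
    using R_lt r0_lo by (simp add: card_mono subset_iff)
  also have "\<dots> \<le> 3 * real r0 / (2 * real k)" using uniform_counts[OF r0_lo \<open>r0 \<le> T\<close> jb(1)] by simp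
  also have "\<dots> \<le> 3 * (128 * real k * S + 1) / (2 * real k)"
    using r0_hi k_pos by (intro divide_right_mono) auto
  also have "\<dots> = 192 * S + 3 / (2 * real k)" using k_pos by (simp add: field_simps)
  also have "\<dots> \<le> 192 * S + 3 / 2" using k_pos by (simp add: field_simps)
  finally have "rsum Y a jb ?t1 \<le> 1890 * L"
    unfolding rsum_def using reward_le_if_few_samples jb(1) by blast
  also have "\<dots> \<le> 420 * c_const\<^sup>2 * ln (real W)" using ln_W_bounds(1) unfolding c_const_def by simp
  finally show False using jb(2) by simp
qed

lemma pulls_in_phase2_ge:
  assumes "t \<le> W" "\<not> in_phase1 k W Y a t" "j < k"
  shows "64 * S \<le> real (pulls a j t)"
proof -
  let ?t1 = "phase2_start k W Y a"
  have long: "128 * real k * S \<le> real (?t1 - 1)" using phase1_long assms by blast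
  have t1_t: "?t1 \<le> t" using phase2_start_le assms(2) .
  have "64 * S = 128 * real k * S / (2 * real k)" using k_pos by simp
  also have "\<dots> \<le> real (?t1 - 1) / (2 * real k)" using long k_pos by (intro divide_right_mono) auto
  also have "\<dots> \<le> real (pulls a j ?t1)"
    using uniform_counts[OF long _ assms(3)] pulls_phase2_start[OF exec] t1_t assms W_hi by simp
  also have "\<dots> \<le> real (pulls a j t)" using pulls_mono[OF t1_t] by simp
  finally show ?thesis .
qed

text \<open>\<open>576 L / \<mu>\<^sup>* = 64 S\<close> is the sample threshold of \<open>E\<^sub>2\<close> and \<open>E\<^sub>3\<close>.\<close>
lemma phase2_samples:
  assumes "t \<in> {1..W}" "\<not> in_phase1 k W Y a t" "j < k"
  defines "n \<equiv> pulls a j t" and "h \<equiv> muhat Y j (pulls a j t)"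
  shows "0 < n" "n \<le> T" "576 * L / ms \<le> real n" "0 \<le> h"
    "NCB W Y a j t = h + 6 * sqrt (2 * h * ln (real W) / real n)"
proof -
  have "64 * S \<le> real n" using pulls_in_phase2_ge assms unfolding n_def by simp
  then show n_lo: "576 * L / ms \<le> real n" unfolding S_eq by simp
  show "0 < n" using n_lo S_ge L_ge_1 mu_star_pos \<open>64 * S \<le> real n\<close> by linarith
  then show "NCB W Y a j t = h + 6 * sqrt (2 * h * ln (real W) / real n)"
    unfolding n_def h_def by (rule NCB_eq_muhat)
  show "n \<le> T" using pulls_le[of a j t] assms(1) W_hi unfolding n_def
    by (meson atLeastAtMost_iff diff_le_self le_trans)
  show "0 \<le> h" using Y_nonneg assms unfolding h_def by (simp add: muhat_nonneg)
qed

lemma optimal_NCB_ge: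
  assumes t: "t \<in> {1..W}" "\<not> in_phase1 k W Y a t" and j: "j < k" "\<mu> j = ms"
  shows "ms \<le> NCB W Y a j t"
proof -
  note n = phase2_samples[OF t j(1)]
  have "ms / 64 < \<mu> j" using j(2) mu_star_pos by simp
  then have "\<bar>ms - muhat Y j (pulls a j t)\<bar> \<le> 3 * sqrt (ms * L / real (pulls a j t))"
    using muhat_close[OF j(1)] n j(2) S_eq by simp
  then show ?thesis
    unfolding n(5) using ncb_index_ge_mean[OF mu_star_pos _ _ _ ln_W_bounds(1)] n L_ge_1 by simp
qed

lemma NCB_le_mean:
  assumes t: "t \<in> {1..W}" "\<not> in_phase1 k W Y a t" and i: "i < k" "ms / 64 < \<mu> i"
  shows "NCB W Y a i t \<le> \<mu> i + 12 * sqrt (ms * L / real (pulls a i t))"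
proof -
  note n = phase2_samples[OF t i(1)]
  have "muhat Y i (pulls a i t) \<le> \<mu> i + 3 * sqrt (\<mu> i * L / real (pulls a i t))"
    using muhat_close[OF i] n S_eq by fastforce
  then show ?thesis
    unfolding n(5) using ncb_index_le_mean[OF mu_star_pos _ _ _ ln_W_bounds(3,2)] n L_ge_1
      mu_range i mu_le_ms by simp
qed

lemma bad_arm_NCB_lt:
  assumes t: "t \<in> {1..W}" "\<not> in_phase1 k W Y a t" and i: "i < k" "\<mu> i \<le> ms / 64"
  shows "NCB W Y a i t < ms"
proof -
  note n = phase2_samples[OF t i(1)]
  have "muhat Y i (pulls a i t) < ms / 32" using muhat_small[OF i] n S_eq by fastforce
  then show ?thesis
    unfolding n(5) using ncb_index_lt_of_small_mean[OF mu_star_pos _ _ _ ln_W_bounds(3,2)] n L_ge_1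
    by simp
qed

text \<open>The alternative \<open>pulls a (a t) t = 0\<close> of a Phase-2 round never occurs, since every
  arm has been sampled by then.\<close>
lemma phase2_pull_maximizes_NCB:
  assumes t: "t \<in> {1..W}" "\<not> in_phase1 k W Y a t" and j: "j < k"
  shows "NCB W Y a j t \<le> NCB W Y a (a t) t"
proof -
  have "a t < k" using exec t unfolding is_execution_def by blast
  then have "pulls a (a t) t \<noteq> 0" using phase2_samples(1)[OF t] by simp
  moreover have "if in_phase1 k W Y a t then a t = U t
      else pulls a (a t) t = 0 \<or> (\<forall>j<k. 0 < pulls a j t \<and> NCB W Y a j t \<le> NCB W Y a (a t) t)"
    using exec t(1) unfolding is_execution_def by blast
  ultimately show ?thesis using t(2) j by simp
qed

lemma mean_ge_if_pulled_in_phase2: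
  assumes i: "i < k" and "pulled_in_phase2 k W Y a i"
  shows "ms - 12 * sqrt (ms * L / (real (total_pulls W a i) - 1)) \<le> \<mu> i"
proof -
  obtain t where t: "t \<in> {1..W}" "\<not> in_phase1 k W Y a t" "a t = i"
    using assms unfolding pulled_in_phase2_def by blast
  obtain tl where tl: "tl \<in> {1..W}" "t \<le> tl" "a tl = i" "total_pulls W a i = pulls a i tl + 1"
    using total_pulls_eq_last_pull[of t W a i] t(1,3) by blast
  have tl_phase2: "\<not> in_phase1 k W Y a tl" using t(2) tl(2) in_phase1_mono by blast
  obtain js where js: "js < k" "\<mu> js = ms" by (rule optimal_arm_exists)
  have "ms \<le> NCB W Y a i tl"
    using optimal_NCB_ge[OF tl(1) tl_phase2 js] phase2_pull_maximizes_NCB[OF tl(1) tl_phase2 js(1)]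
      tl(3) by simp
  then have "ms / 64 < \<mu> i" using bad_arm_NCB_lt[OF tl(1) tl_phase2 i] by force
  then show ?thesis
    using NCB_le_mean[OF tl(1) tl_phase2 i] \<open>ms \<le> NCB W Y a i tl\<close> tl(4) by simp
qed

end

theorem lemma11:
  fixes k W T :: nat and \<mu> :: "nat \<Rightarrow> real" and Y :: "nat \<Rightarrow> nat \<Rightarrow> real"
    and U :: "nat \<Rightarrow> nat" and a :: "nat \<Rightarrow> nat"
  assumes k_pos: "0 < k" and T_pos: "1 \<le> T"
    and mu_range: "\<forall>i<k. 0 \<le> \<mu> i \<and> \<mu> i \<le> 1"
    and mu_star_pos: "mu_star k \<mu> > 0"
    and Y_range: "\<forall>i<k. \<forall>s. 0 \<le> Y i s \<and> Y i s \<le> 1"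
    and U_range: "\<forall>t. U t < k"
    and W_lo: "sqrt (real T) \<le> real W" and W_hi: "W \<le> T"
    and T_big: "968 * real k * S_val T (mu_star k \<mu>) \<le> real T"
    and exec: "is_execution k W U Y a"
    and evE: "event_E k T \<mu> Y U"
  shows "\<forall>i<k. pulled_in_phase2 k W Y a i \<and> 2 \<le> total_pulls W a i \<longrightarrow>
           \<mu> i \<ge> mu_star k \<mu> - 4 * c_const *
              sqrt (mu_star k \<mu> * ln (real T) / (real (total_pulls W a i) - 1))"
proof (intro allI impI)
  fix i assume i: "i < k" and pulled: "pulled_in_phase2 k W Y a i \<and> 2 \<le> total_pulls W a i"
  have "total_pulls W a i \<le> card {1..W}" unfolding total_pulls_def by (intro card_mono) auto
  then have "2 \<le> T" using pulled W_hi by simp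
  then interpret ncb_run k W T \<mu> Y U a
    using assms by unfold_locales auto
  show "\<mu> i \<ge> mu_star k \<mu> - 4 * c_const *
          sqrt (mu_star k \<mu> * ln (real T) / (real (total_pulls W a i) - 1))"
    using mean_ge_if_pulled_in_phase2[OF i] pulled unfolding c_const_def by simp
qed

end
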